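(* Let $n\ge 1$, $1\le m\le n$, $\eta>0$, and let $f:\mathbb{R}^n\to\mathbb{R}$ belong to $\mathcal{F}_{\sigma,L}(\mathbb{R}^n)$ for some constants $0<\sigma\le L$, with minimizer ${\bm x}^*$. Define \[ \gamma=\frac{\sigma/L}{53}\left(\frac{1-\sqrt{1-\sigma/L}}{1+\sqrt{1-\sigma/L}}\right)^2,\qquad \varepsilon=\frac{8nL^2}{\sigma}\Big(1+\frac{n}{m\gamma}\Big)\eta^2, \] and \[ T_0=\left\lceil \frac{n}{m\gamma}\log\frac{(f({\bm x}_0)-f({\bm x}^* ))(1+\frac{n}{m\gamma})}{\varepsilon}\right\rceil . \] Let ${\bm x}_0,{\bm x}_1,\dots$ be the iterates of $\mathrm{BlockCD}[n,m]$ (described in the context) started at ${\bm x}_0$ with line-search accuracy $\eta$, using the deterministic pairwise comparison oracle. Then for every $T\ge T_0$, \[ \mathbb{E}[f({\bm x}_T)-f({\bm x}^* )]\le \varepsilon, \] where the expectation is over the random choice of coordinates made by the algorithm.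
   Context: $\|\cdot\|$ is the Euclidean norm. A function $f:\mathbb{R}^n\to\mathbb{R}$ is $\sigma$-strongly convex if $f({\bm y})\ge f({\bm x})+\nabla f({\bm x})^T({\bm y}-{\bm x})+\frac{\sigma}{2}\|{\bm x}-{\bm y}\|^2$ for all ${\bm x},{\bm y}$, and $L$-strongly smooth if $\|\nabla f({\bm x})-\nabla f({\bm y})\|\le L\|{\bm x}-{\bm y}\|$ for all ${\bm x},{\bm y}$; $\mathcal{F}_{\sigma,L}(\mathbb{R}^n)$ denotes the class of functions on $\mathbb{R}^n$ that are both $\sigma$-strongly convex and $L$-strongly smooth. The deterministic pairwise comparison (PC) oracle is the map $O_f({\bm x},{\bm y})=\mathrm{sign}\{f({\bm y})-f({\bm x})\}\in\{-1,+1\}$; the algorithm accesses $f$ only through this oracle. PC-based line search: given a point ${\bm x}$, a direction ${\bm d}$ and an accuracy, it approximately minimizes $\alpha\mapsto f({\bm x}+\alpha{\bm d})$ using only oracle calls: starting from $\alpha=0$ with brackets $\alpha^\pm=\pm1$ (one of which is reset to $0$ if the oracle comparisons at ${\bm x}\pm{\bm d}$ show $f$ decreases only on one side), it doubles each bracket endpoint $\alpha^\pm$ while $O_f({\bm x},{\bm x}+\alpha^\pm{\bm d})<0$, and then repeatedly compares $f$ at the current point ${\bm x}+\alpha{\bm d}$ with $f$ at the midpoints ${\bm x}+\frac12(\alpha+\alpha^\pm){\bm d}$, moving the current point to a midpoint with smaller value (and shrinking the bracket accordingly) or otherwise shrinking both brackets toward $\alpha$, until the bracket width is at most the accuracy;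 "solving within accuracy $a$" means the returned value lies within $a$ of the exact one-dimensional minimizer. $\mathrm{BlockCD}[n,m]$: input ${\bm x}_0\in\mathbb{R}^n$ and $\eta>0$. At iteration $t=0,1,\dots$: choose $m$ coordinates $i_1,\dots,i_m$ out of $\{1,\dots,n\}$ according to the uniform distribution; (direction estimate step) for each $k=1,\dots,m$ solve $\min_{\alpha\in\mathbb{R}} f({\bm x}_t+\alpha{\bm e}_{i_k})$ within accuracy $\eta/2$ by the PC-based line search, obtaining $\alpha_{t,i_k}$ (here ${\bm e}_i$ is the $i$-th unit basis vector); set ${\bm d}_t=\sum_{k=1}^m\alpha_{t,i_k}{\bm e}_{i_k}$, and if ${\bm d}_t={\bm 0}$ add $\eta/2$ to its $i_1$-th component; (search step) solve $\min_\beta f({\bm x}_t+\beta{\bm d}_t/\|{\bm d}_t\|)$ within accuracy $\eta$ by the PC-based line search, obtaining $\beta_t$; set ${\bm x}_{t+1}={\bm x}_t+\beta_t{\bm d}_t/\|{\bm d}_t\|$. *)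

theory Defs
  imports "HOL-Analysis.Analysis" "HOL-Probability.Probability"
begin

definition strongly_convex_smooth :: "real \<Rightarrow> real \<Rightarrow> (real^'n \<Rightarrow> real) \<Rightarrow> bool" where
  "strongly_convex_smooth \<sigma> L f \<longleftrightarrow>
     (\<exists>g :: real^'n \<Rightarrow> real^'n.
        (\<forall>x. (f has_derivative (\<lambda>h. g x \<bullet> h)) (at x)) \<and>
        (\<forall>x y. f y \<ge> f x + g x \<bullet> (y - x) + \<sigma> / 2 * (norm (x - y))\<^sup>2) \<and>
        (\<forall>x y. norm (g x - g y) \<le> L * norm (x - y)))"

text \<open>Deterministic pairwise comparison oracle sign(f y - f x) with values in {-1,+1};
  ties are mapped to +1.\<close>
definition PC :: "('a \<Rightarrow> real) \<Rightarrow> 'a \<Rightarrow> 'a \<Rightarrow> int" where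
  "PC f x y = (if f y - f x < 0 then -1 else 1)"

definition ls_init :: "(real^'n \<Rightarrow> real) \<Rightarrow> real^'n \<Rightarrow> real^'n \<Rightarrow> real \<times> real" where
  "ls_init f x d =
     (if PC f x (x + d) > 0 \<and> PC f x (x - d) < 0 then (-1, 0)
      else if PC f x (x + d) < 0 \<and> PC f x (x - d) > 0 then (0, 1)
      else (-1, 1))"

definition ls_double :: "(real^'n \<Rightarrow> real) \<Rightarrow> real^'n \<Rightarrow> real^'n \<Rightarrow> real \<Rightarrow> real" where
  "ls_double f x d e =
     e * 2 ^ (LEAST k::nat. \<not> PC f x (x + (e * 2 ^ k) *\<^sub>R d) < 0)"

definition ls_step :: "(real^'n \<Rightarrow> real) \<Rightarrow> real^'n \<Rightarrow> real^'n \<Rightarrow>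
    real \<times> real \<times> real \<Rightarrow> real \<times> real \<times> real" where
  "ls_step f x d s = (case s of (a, am, ap) \<Rightarrow>
     if PC f (x + a *\<^sub>R d) (x + ((a + ap) / 2) *\<^sub>R d) < 0 then ((a + ap) / 2, a, ap)
     else if PC f (x + a *\<^sub>R d) (x + ((a + am) / 2) *\<^sub>R d) < 0 then ((a + am) / 2, am, a)
     else (a, (a + am) / 2, (a + ap) / 2))"

definition pc_line_search :: "(real^'n \<Rightarrow> real) \<Rightarrow> real^'n \<Rightarrow> real^'n \<Rightarrow> real \<Rightarrow> real" where
  "pc_line_search f x d acc =
     (let (am0, ap0) = ls_init f x d;
          s0 = (0, ls_double f x d am0, ls_double f x d ap0);
          k = (LEAST k::nat. (case (ls_step f x d ^^ k) s0 of (a, am, ap) \<Rightarrow> ap - am \<le> acc))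
      in fst ((ls_step f x d ^^ k) s0))"

definition coord_choices :: "nat \<Rightarrow> 'n list set" where
  "coord_choices m = {cs. distinct cs \<and> length cs = m}"

definition blockcd_step :: "(real^'n \<Rightarrow> real) \<Rightarrow> real \<Rightarrow> real^'n \<Rightarrow> 'n list \<Rightarrow> real^'n" where
  "blockcd_step f \<eta> x cs =
     (let d0 = (\<Sum>i\<in>set cs. pc_line_search f x (axis i 1) (\<eta> / 2) *\<^sub>R axis i 1);
          d = (if d0 = 0 then d0 + (\<eta> / 2) *\<^sub>R axis (hd cs) 1 else d0);
          u = (1 / norm d) *\<^sub>R d;
          \<beta> = pc_line_search f x u \<eta>
      in x + \<beta> *\<^sub>R u)"

primrec blockcd_dist :: "(real^'n \<Rightarrow> real) \<Rightarrow> real \<Rightarrow> nat \<Rightarrow> real^'n \<Rightarrow> nat \<Rightarrow> (real^'n) pmf" where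
  "blockcd_dist f \<eta> m x0 0 = return_pmf x0"
| "blockcd_dist f \<eta> m x0 (Suc t) =
     bind_pmf (blockcd_dist f \<eta> m x0 t)
       (\<lambda>x. map_pmf (blockcd_step f \<eta> x) (pmf_of_set (coord_choices m)))"

end

(*
  Along every line a strongly convex function is strictly unimodal and coercive, so the
  comparison-based line search keeps the exact one-dimensional minimiser inside its bracket
  and returns it to the requested accuracy.  Writing G for the squared norm of the gradient
  on the chosen block, the coordinate searches therefore produce a direction d with
  g . d <= -G/(2L) and |d|^2 <= 3G/sigma^2 unless G < m L^2 eta^2, and one iteration
  decreases f by sigma^2 G / (48 L^3) up to an additive O(eta^2).  A uniformly chosen block
  carries in expectation the fraction m/n of |grad f|^2, and |grad f|^2 >= 2 sigma (f - f* )
  turns this into E_{t+1} <= (1 - c) E_t + B for the expected gap E_t, with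
  c = sigma^3 m / (24 L^3 n) >= m gamma / n.  Unrolling the recursion up to T0 gives the bound.
*)

theory Submission
  imports Defs
begin

section \<open>Uniform choice of coordinate blocks\<close>

lemma finite_coord_choices: "finite (coord_choices m :: 'n::finite list set)"
proof -
  have "coord_choices m \<subseteq> {cs :: 'n list. set cs \<subseteq> UNIV \<and> length cs = m}"
    unfolding coord_choices_def by auto
  then show ?thesis
    by (rule finite_subset) (rule finite_lists_length_eq, simp)
qed

lemma coord_choices_nonempty:
  assumes "m \<le> CARD('n::finite)"
  shows "coord_choices m \<noteq> ({} :: 'n list set)"
proof -
  obtain xs :: "'n list" where xs: "set xs = UNIV" "distinct xs"
    using finite_distinct_list[of "UNIV :: 'n set"] by auto
  then have "length xs = CARD('n)"
    using distinct_card by fastforce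
  then have "take m xs \<in> coord_choices m"
    using xs assms unfolding coord_choices_def by simp
  then show ?thesis by blast
qed

lemma set_pmf_of_coord_choices:
  assumes "m \<le> CARD('n::finite)"
  shows "set_pmf (pmf_of_set (coord_choices m :: 'n list set)) = coord_choices m"
  using coord_choices_nonempty[OF assms] finite_coord_choices by (rule set_pmf_of_set)

lemma card_coord_choices_containing:
  fixes i j :: "'n::finite"
  shows "card {cs \<in> coord_choices m. i \<in> set cs} = card {cs \<in> coord_choices m. j \<in> set cs}"
proof -
  let ?\<tau> = "map (Transposition.transpose i j)"
  have "j \<in> set (?\<tau> cs) \<longleftrightarrow> i \<in> set cs" "i \<in> set (?\<tau> cs) \<longleftrightarrow> j \<in> set cs" for cs
    using inj_image_mem_iff[OF inj_transpose, of i j i "set cs"]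
      inj_image_mem_iff[OF inj_transpose, of i j j "set cs"] by simp_all
  then have "bij_betw ?\<tau> {cs \<in> coord_choices m. i \<in> set cs} {cs \<in> coord_choices m. j \<in> set cs}"
    by (intro bij_betwI[where g = ?\<tau>]) (auto simp: coord_choices_def distinct_map)
  then show ?thesis by (rule bij_betw_same_card)
qed

lemma sum_coord_choices_sum:
  fixes h :: "'n::finite \<Rightarrow> real"
  shows "(\<Sum>cs\<in>coord_choices m. \<Sum>i\<in>set cs. h i)
         = real (card (coord_choices m :: 'n list set)) * real m / real CARD('n) * (\<Sum>i\<in>UNIV. h i)"
proof -
  let ?C = "coord_choices m :: 'n list set"
  obtain i0 :: 'n where True by blast
  define c where "c = card {cs \<in> ?C. i0 \<in> set cs}"
  have count: "card {cs \<in> ?C. i \<in> set cs} = c" for i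
    unfolding c_def by (rule card_coord_choices_containing)
  have swap: "(\<Sum>cs\<in>?C. \<Sum>i\<in>set cs. h i) = real c * (\<Sum>i\<in>UNIV. h i)" for h :: "'n \<Rightarrow> real"
  proof -
    have "(\<Sum>cs\<in>?C. \<Sum>i\<in>set cs. h i) = (\<Sum>cs\<in>?C. \<Sum>i\<in>UNIV. if i \<in> set cs then h i else 0)"
      by (simp add: sum.If_cases Int_absorb1)
    also have "\<dots> = (\<Sum>i\<in>UNIV. \<Sum>cs\<in>?C. if i \<in> set cs then h i else 0)"
      by (rule sum.swap)
    also have "\<dots> = (\<Sum>i\<in>UNIV. real c * h i)"
      by (simp add: sum.If_cases finite_coord_choices Int_def count)
    finally show ?thesis by (simp add: sum_distrib_left)
  qed
  have "real (card ?C) * real m = (\<Sum>cs\<in>?C. \<Sum>i\<in>set cs. 1)"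
    by (simp add: coord_choices_def distinct_card)
  also have "\<dots> = real c * real CARD('n)"
    using swap[of "\<lambda>_. 1"] by simp
  finally have "real c = real (card ?C) * real m / real CARD('n)"
    by (simp add: eq_divide_eq)
  then show ?thesis
    by (simp only: swap)
qed

lemma expectation_coord_choices_sum:
  fixes h :: "'n::finite \<Rightarrow> real"
  assumes "m \<le> CARD('n)"
  shows "measure_pmf.expectation (pmf_of_set (coord_choices m)) (\<lambda>cs. \<Sum>i\<in>set cs. h i)
         = real m / real CARD('n) * (\<Sum>i\<in>UNIV. h i)"
proof -
  have "card (coord_choices m :: 'n list set) > 0"
    using coord_choices_nonempty[OF assms] finite_coord_choices by (simp add: card_gt_0_iff)
  then show ?thesis
    using coord_choices_nonempty[OF assms] finite_coord_choices
    by (subst integral_pmf_of_set) (simp_all add: sum_coord_choices_sum)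
qed

section \<open>Scalar estimates\<close>

lemma linear_recurrence_bound:
  fixes E :: "nat \<Rightarrow> real"
  assumes step: "\<And>t. E (Suc t) \<le> (1 - c) * E t + B" and c: "0 < c" "c \<le> 1" and B: "0 \<le> B"
  shows "E t \<le> (1 - c) ^ t * E 0 + B / c"
proof (induction t)
  case (Suc t)
  have "E (Suc t) \<le> (1 - c) * ((1 - c) ^ t * E 0 + B / c) + B"
    using step[of t] mult_left_mono[OF Suc] c by (smt (verit))
  also have "\<dots> = (1 - c) ^ Suc t * E 0 + B / c"
    using c by (simp add: field_simps)
  finally show ?case .
qed (use B c in simp)

lemma geometric_decay_below:
  fixes c D Q \<epsilon> :: real
  assumes c: "0 < c" "c \<le> 1" and "0 \<le> D" "0 < Q" "0 < \<epsilon>"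
    and T: "\<lceil>1 / c * ln (D * Q / \<epsilon>)\<rceil> \<le> int T"
  shows "(1 - c) ^ T * D \<le> \<epsilon> / Q"
proof (cases "D = 0")
  case False
  then have pos: "0 < D * Q / \<epsilon>"
    using assms by simp
  have "ln (D * Q / \<epsilon>) \<le> c * real T"
    using T c by (simp add: ceiling_le_iff field_simps)
  have "(1 - c) ^ T \<le> exp (- c) ^ T"
    using c exp_ge_add_one_self[of "- c"] by (intro power_mono) auto
  also have "\<dots> = exp (- (c * real T))"
    by (simp add: exp_of_nat_mult[symmetric] mult.commute)
  also have "\<dots> \<le> exp (- ln (D * Q / \<epsilon>))"
    using \<open>ln (D * Q / \<epsilon>) \<le> c * real T\<close> by simp
  also have "\<dots> = \<epsilon> / (D * Q)"
    using pos by (simp add: exp_minus)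
  finally show ?thesis
    using assms False by (simp add: field_simps)
qed (use assms in simp)

lemma recurrence_solution_le:
  fixes c D B e :: real
  assumes c: "0 < c" "c \<le> 1" and "0 \<le> D" "0 < e" "B \<le> e"
  defines "\<epsilon> \<equiv> e * (1 + 1 / c)"
  assumes T: "\<lceil>1 / c * ln (D * (1 + 1 / c) / \<epsilon>)\<rceil> \<le> int T"
  shows "(1 - c) ^ T * D + B / c \<le> \<epsilon>"
proof -
  have Q: "0 < 1 + 1 / c"
    using c by (simp add: add_pos_pos)
  then have "(1 - c) ^ T * D \<le> \<epsilon> / (1 + 1 / c)"
    using assms by (intro geometric_decay_below) auto
  also have "\<dots> = e"
    using Q by (simp add: \<epsilon>_def)
  finally have "(1 - c) ^ T * D \<le> e" .
  moreover have "B / c \<le> e / c"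
    using assms by (simp add: divide_right_mono)
  ultimately show ?thesis
    by (simp add: \<epsilon>_def distrib_left)
qed

lemma condition_ratio_bounds:
  fixes \<kappa> :: real
  assumes "0 < \<kappa>" "\<kappa> \<le> 1"
  shows "0 < (1 - sqrt (1 - \<kappa>)) / (1 + sqrt (1 - \<kappa>))"
    and "(1 - sqrt (1 - \<kappa>)) / (1 + sqrt (1 - \<kappa>)) \<le> \<kappa>"
proof -
  have "0 \<le> sqrt (1 - \<kappa>)" "sqrt (1 - \<kappa>) < 1"
    using assms by simp_all
  then have "0 < 1 - sqrt (1 - \<kappa>)" "0 < 1 + sqrt (1 - \<kappa>)"
    by linarith+
  then show "0 < (1 - sqrt (1 - \<kappa>)) / (1 + sqrt (1 - \<kappa>))"
    by simp
  have "1 - \<kappa> \<le> sqrt (1 - \<kappa>)"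
    using assms mult_left_le_one_le[of "1 - \<kappa>" "1 - \<kappa>"]
    by (intro real_le_rsqrt) (simp add: power2_eq_square)
  moreover have "(1 - sqrt (1 - \<kappa>)) / (1 + sqrt (1 - \<kappa>)) \<le> (1 - sqrt (1 - \<kappa>)) / 1"
    using \<open>0 < 1 - sqrt (1 - \<kappa>)\<close> \<open>0 \<le> sqrt (1 - \<kappa>)\<close>
    by (intro frac_le) linarith+
  ultimately show "(1 - sqrt (1 - \<kappa>)) / (1 + sqrt (1 - \<kappa>)) \<le> \<kappa>"
    by simp
qed

lemma condition_rate_bounds:
  fixes \<kappa> :: real
  assumes "0 < \<kappa>" "\<kappa> \<le> 1"
  defines "\<gamma> \<equiv> \<kappa> / 53 * ((1 - sqrt (1 - \<kappa>)) / (1 + sqrt (1 - \<kappa>)))\<^sup>2"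
  shows "0 < \<gamma>" and "\<gamma> \<le> \<kappa> ^ 3 / 53"
proof -
  let ?r = "(1 - sqrt (1 - \<kappa>)) / (1 + sqrt (1 - \<kappa>))"
  show "0 < \<gamma>"
    using condition_ratio_bounds(1)[OF assms(1,2)] assms(1) unfolding \<gamma>_def
    by (intro mult_pos_pos) auto
  have "?r\<^sup>2 \<le> \<kappa>\<^sup>2"
    using condition_ratio_bounds[OF assms(1,2)] by (intro power_mono) auto
  then show "\<gamma> \<le> \<kappa> ^ 3 / 53"
    using assms(1) mult_left_mono[of "?r\<^sup>2" "\<kappa>\<^sup>2" "\<kappa> / 53"]
    by (simp add: \<gamma>_def power2_eq_square power3_eq_cube)
qed

lemma block_rate_bounds:
  fixes \<sigma> L :: real and m n :: nat
  assumes "1 \<le> m" "m \<le> n" "0 < \<sigma>" "\<sigma> \<le> L"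
  defines "c \<equiv> real m / real n *
    ((\<sigma> / L) / 53 * ((1 - sqrt (1 - \<sigma> / L)) / (1 + sqrt (1 - \<sigma> / L)))\<^sup>2)"
  shows "0 < c" and "c \<le> 1" and "c \<le> \<sigma> ^ 3 * real m / (24 * L ^ 3 * real n)"
proof -
  define \<gamma> where "\<gamma> = (\<sigma> / L) / 53 * ((1 - sqrt (1 - \<sigma> / L)) / (1 + sqrt (1 - \<sigma> / L)))\<^sup>2"
  define a where "a = real m / real n"
  have \<kappa>: "0 < \<sigma> / L" "\<sigma> / L \<le> 1"
    using assms(3,4) by simp_all
  have "0 < \<gamma>" "\<gamma> \<le> (\<sigma> / L) ^ 3 / 53"
    using condition_rate_bounds[OF \<kappa>] unfolding \<gamma>_def by simp_all
  then have "\<gamma> \<le> 1" and \<gamma>_le: "\<gamma> \<le> \<sigma> ^ 3 / (24 * L ^ 3)"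
    using \<kappa> power_le_one[of "\<sigma> / L" 3] by (simp_all add: power_divide)
  have a: "0 < a" "a \<le> 1" and c_eq: "c = a * \<gamma>"
    using assms(1,2) by (simp_all add: a_def c_def \<gamma>_def)
  show "0 < c" "c \<le> 1"
    unfolding c_eq using a \<open>0 < \<gamma>\<close> \<open>\<gamma> \<le> 1\<close> mult_mono[of a 1 \<gamma> 1] by simp_all
  have "c \<le> a * (\<sigma> ^ 3 / (24 * L ^ 3))"
    unfolding c_eq using a \<gamma>_le by (intro mult_left_mono) simp_all
  also have "\<dots> = \<sigma> ^ 3 * real m / (24 * L ^ 3 * real n)"
    by (simp add: a_def mult_ac)
  finally show "c \<le> \<sigma> ^ 3 * real m / (24 * L ^ 3 * real n)" .
qed

lemma step_error_le:
  fixes n \<sigma> L :: real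
  assumes "1 \<le> m" "real m \<le> n" "0 < \<sigma>" "\<sigma> \<le> L"
  shows "L + real m * L / 48 \<le> 8 * n * L\<^sup>2 / \<sigma>"
proof -
  have "L + real m * L / 48 = L * (1 + real m / 48)"
    by (simp add: algebra_simps)
  also have "\<dots> \<le> L * (8 * n)"
    using assms by (intro mult_left_mono) auto
  also have "\<dots> \<le> L * (8 * n) * (L / \<sigma>)"
    using mult_left_mono[of 1 "L / \<sigma>" "L * (8 * n)"] assms by simp
  also have "\<dots> = 8 * n * L\<^sup>2 / \<sigma>"
    by (simp add: power2_eq_square)
  finally show ?thesis .
qed

section \<open>Strongly convex functions with Lipschitz gradient\<close>

locale strongly_convex_smooth_fun =
  fixes f :: "'a::real_inner \<Rightarrow> real" and g :: "'a \<Rightarrow> 'a" and \<sigma> L :: real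
  assumes strongly_convex: "\<And>x y. f x + g x \<bullet> (y - x) + \<sigma> / 2 * (norm (x - y))\<^sup>2 \<le> f y"
    and gradient_lipschitz: "\<And>x y. norm (g x - g y) \<le> L * norm (x - y)"
    and sigma_pos: "0 < \<sigma>" and sigma_le_L: "\<sigma> \<le> L"
begin

lemma L_pos: "0 < L"
  using sigma_pos sigma_le_L by linarith

lemma quadratic_upper_bound: "f y \<le> f x + g x \<bullet> (y - x) + L * (norm (y - x))\<^sup>2"
proof -
  have "0 \<le> \<sigma> / 2 * (norm (y - x))\<^sup>2"
    using sigma_pos by simp
  then have "f y \<le> f x + g y \<bullet> (y - x)"
    using strongly_convex[of y x] by (simp add: inner_diff_right)
  also have "g y \<bullet> (y - x) = g x \<bullet> (y - x) + (g y - g x) \<bullet> (y - x)"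
    by (simp add: inner_diff_left)
  also have "(g y - g x) \<bullet> (y - x) \<le> norm (g y - g x) * norm (y - x)"
    by (rule norm_cauchy_schwarz)
  also have "\<dots> \<le> L * (norm (y - x))\<^sup>2"
    using mult_right_mono[OF gradient_lipschitz[of y x] norm_ge_zero[of "y - x"]]
    by (simp add: power2_eq_square)
  finally show ?thesis by simp
qed

lemma gradient_strongly_monotone: "\<sigma> * (norm (y - x))\<^sup>2 \<le> (g y - g x) \<bullet> (y - x)"
  using strongly_convex[of x y] strongly_convex[of y x]
  by (simp add: norm_minus_commute inner_diff_left inner_diff_right inner_commute algebra_simps)

lemma suboptimality_le_gradient_norm: "f x - f z \<le> (norm (g x))\<^sup>2 / (2 * \<sigma>)"
proof -
  have "0 \<le> (norm (g x + \<sigma> *\<^sub>R (z - x)))\<^sup>2" by simp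
  also have "\<dots> = (norm (g x))\<^sup>2 + 2 * \<sigma> * (g x \<bullet> (z - x)) + \<sigma>\<^sup>2 * (norm (z - x))\<^sup>2"
    unfolding power2_norm_eq_inner
    by (simp add: inner_add_left inner_add_right inner_commute power2_eq_square algebra_simps)
  finally have "- (norm (g x))\<^sup>2 / (2 * \<sigma>) \<le> g x \<bullet> (z - x) + \<sigma> / 2 * (norm (z - x))\<^sup>2"
    using sigma_pos by (simp add: field_simps power2_eq_square)
  moreover have "norm (x - z) = norm (z - x)"
    by (rule norm_minus_commute)
  ultimately show ?thesis
    using strongly_convex[of x z] by (simp add: field_simps)
qed

lemma line_slope_strong_mono:
  assumes "r \<le> s"
  shows "g (x + r *\<^sub>R d) \<bullet> d + \<sigma> * (s - r) * (norm d)\<^sup>2 \<le> g (x + s *\<^sub>R d) \<bullet> d"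
proof (cases "r = s")
  case False
  have "(x + s *\<^sub>R d) - (x + r *\<^sub>R d) = (s - r) *\<^sub>R d"
    by (simp add: algebra_simps)
  then have "(s - r) * (\<sigma> * (s - r) * (norm d)\<^sup>2) = \<sigma> * (norm ((x + s *\<^sub>R d) - (x + r *\<^sub>R d)))\<^sup>2"
    by (simp add: power_mult_distrib power2_eq_square)
  also have "\<dots> \<le> (s - r) * (g (x + s *\<^sub>R d) \<bullet> d - g (x + r *\<^sub>R d) \<bullet> d)"
    using gradient_strongly_monotone[of "x + s *\<^sub>R d" "x + r *\<^sub>R d"]
    by (simp add: inner_diff_left algebra_simps)
  finally show ?thesis
    using assms False by (simp add: mult_le_cancel_left_pos)
qed simp

lemma line_strict_increase:
  assumes "d \<noteq> 0" "s \<noteq> r" "0 \<le> (s - r) * (g (x + r *\<^sub>R d) \<bullet> d)"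
  shows "f (x + r *\<^sub>R d) < f (x + s *\<^sub>R d)"
proof -
  have "0 < \<sigma> / 2 * (norm ((r - s) *\<^sub>R d))\<^sup>2"
    using assms sigma_pos by simp
  also have "\<dots> \<le> f (x + s *\<^sub>R d) - f (x + r *\<^sub>R d) - (s - r) * (g (x + r *\<^sub>R d) \<bullet> d)"
    using strongly_convex[of "x + r *\<^sub>R d" "x + s *\<^sub>R d"]
    by (simp add: algebra_simps inner_diff_right)
  finally show ?thesis
    using assms(3) by linarith
qed

lemma line_strict_antimono_before_stationary:
  assumes "d \<noteq> 0" "g (x + t *\<^sub>R d) \<bullet> d = 0"
  shows "strict_antimono_on {..t} (\<lambda>\<alpha>. f (x + \<alpha> *\<^sub>R d))"
proof (rule monotone_onI)
  fix r s assume "r \<in> {..t}" "s \<in> {..t}" "r < s"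
  moreover have "0 \<le> \<sigma> * (t - s) * (norm d)\<^sup>2"
    using \<open>s \<in> {..t}\<close> sigma_pos by simp
  ultimately have "g (x + s *\<^sub>R d) \<bullet> d \<le> 0"
    using line_slope_strong_mono[of s t x d] assms(2) by simp
  then show "f (x + s *\<^sub>R d) < f (x + r *\<^sub>R d)"
    using \<open>r < s\<close> by (intro line_strict_increase[OF assms(1)]) (auto simp: mult_nonpos_nonpos)
qed

lemma line_strict_mono_after_stationary:
  assumes "d \<noteq> 0" "g (x + t *\<^sub>R d) \<bullet> d = 0"
  shows "strict_mono_on {t..} (\<lambda>\<alpha>. f (x + \<alpha> *\<^sub>R d))"
proof (rule monotone_onI)
  fix r s assume "r \<in> {t..}" "s \<in> {t..}" "r < s"
  moreover have "0 \<le> \<sigma> * (r - t) * (norm d)\<^sup>2"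
    using \<open>r \<in> {t..}\<close> sigma_pos by simp
  ultimately have "0 \<le> g (x + r *\<^sub>R d) \<bullet> d"
    using line_slope_strong_mono[of t r x d] assms(2) by simp
  then show "f (x + r *\<^sub>R d) < f (x + s *\<^sub>R d)"
    using \<open>r < s\<close> by (intro line_strict_increase[OF assms(1)]) auto
qed

lemma line_minimum_at_stationary:
  assumes "g (x + t *\<^sub>R d) \<bullet> d = 0"
  shows "f (x + t *\<^sub>R d) \<le> f (x + s *\<^sub>R d)"
proof -
  have "(x + s *\<^sub>R d) - (x + t *\<^sub>R d) = (s - t) *\<^sub>R d"
    by (simp add: algebra_simps)
  then have "g (x + t *\<^sub>R d) \<bullet> ((x + s *\<^sub>R d) - (x + t *\<^sub>R d)) = 0"
    using assms by (simp only: inner_scaleR_right)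
  moreover have "0 \<le> \<sigma> / 2 * (norm ((x + t *\<^sub>R d) - (x + s *\<^sub>R d)))\<^sup>2"
    using sigma_pos by simp
  ultimately show ?thesis
    using strongly_convex[of "x + t *\<^sub>R d" "x + s *\<^sub>R d"] by linarith
qed

lemma line_ge_far_out:
  assumes "2 * \<bar>g x \<bullet> d\<bar> \<le> \<sigma> * \<bar>s\<bar> * (norm d)\<^sup>2"
  shows "f x \<le> f (x + s *\<^sub>R d)"
proof -
  have "- (\<bar>s\<bar> * \<bar>g x \<bullet> d\<bar>) \<le> s * (g x \<bullet> d)"
    using abs_ge_minus_self[of "s * (g x \<bullet> d)"] by (simp add: abs_mult)
  moreover have "\<bar>s\<bar> * \<bar>g x \<bullet> d\<bar> \<le> \<sigma> / 2 * s\<^sup>2 * (norm d)\<^sup>2"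
    using mult_left_mono[OF assms abs_ge_zero[of s]]
    by (simp add: power2_eq_square abs_mult_self mult_ac)
  ultimately show ?thesis
    using strongly_convex[of x "x + s *\<^sub>R d"] by (simp add: power_mult_distrib)
qed

lemma exists_line_stationary:
  assumes "d \<noteq> 0"
  shows "\<exists>t. g (x + t *\<^sub>R d) \<bullet> d = 0"
proof -
  define p where "p t = g (x + t *\<^sub>R d) \<bullet> d" for t
  define T where "T = \<bar>p 0\<bar> / (\<sigma> * (norm d)\<^sup>2) + 1"
  have "0 < \<sigma> * (norm d)\<^sup>2"
    using assms sigma_pos by simp
  then have "\<sigma> * T * (norm d)\<^sup>2 = \<bar>p 0\<bar> + \<sigma> * (norm d)\<^sup>2"
    using assms sigma_pos unfolding T_def by (simp add: field_simps)
  moreover have "0 \<le> \<bar>p 0\<bar> / (\<sigma> * (norm d)\<^sup>2)"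
    using \<open>0 < \<sigma> * (norm d)\<^sup>2\<close> by simp
  ultimately have T: "0 < T" "\<bar>p 0\<bar> \<le> \<sigma> * T * (norm d)\<^sup>2"
    using \<open>0 < \<sigma> * (norm d)\<^sup>2\<close> unfolding T_def by linarith+
  have "p (-T) \<le> 0" "0 \<le> p T"
    using line_slope_strong_mono[of "-T" 0 x d] line_slope_strong_mono[of 0 T x d] T
    by (simp_all add: p_def)
  have "L-lipschitz_on UNIV g"
    using gradient_lipschitz by (auto intro: lipschitz_onI simp: dist_norm L_pos less_imp_le)
  then have "continuous_on UNIV g"
    by (rule lipschitz_on_continuous_on)
  then have "continuous_on {-T..T} (\<lambda>t. g (x + t *\<^sub>R d))"
    by (rule continuous_on_compose2) (auto intro!: continuous_intros)
  then have "continuous_on {-T..T} p"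
    unfolding p_def by (intro continuous_intros)
  then obtain t where "p t = 0"
    using IVT'[of p "-T" 0 T] \<open>0 \<le> p T\<close> \<open>p (-T) \<le> 0\<close> T(1) by auto
  then show ?thesis
    unfolding p_def by blast
qed

lemma line_minimizer_bounds:
  assumes u: "norm u = 1" and t: "g (x + t *\<^sub>R u) \<bullet> u = 0"
  shows "(g x \<bullet> u) * t \<le> - (g x \<bullet> u)\<^sup>2 / L" and "t\<^sup>2 \<le> (g x \<bullet> u)\<^sup>2 / \<sigma>\<^sup>2"
proof -
  define q where "q = g x \<bullet> u"
  have "\<sigma> * t\<^sup>2 \<le> - q * t"
    using gradient_strongly_monotone[of "x + t *\<^sub>R u" x] t u
    by (simp add: q_def inner_diff_left power_mult_distrib algebra_simps)
  moreover have "0 \<le> \<sigma> * t\<^sup>2"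
    using sigma_pos by simp
  ultimately have qt: "- q * t = \<bar>q\<bar> * \<bar>t\<bar>" and st: "\<sigma> * \<bar>t\<bar> * \<bar>t\<bar> \<le> \<bar>q\<bar> * \<bar>t\<bar>"
    by (simp_all add: abs_mult[symmetric] power2_eq_square abs_mult_self)
  have "\<bar>q\<bar> = \<bar>(g (x + t *\<^sub>R u) - g x) \<bullet> u\<bar>"
    using t by (simp add: q_def inner_diff_left)
  also have "\<dots> \<le> norm (g (x + t *\<^sub>R u) - g x)"
    using Cauchy_Schwarz_ineq2[of "g (x + t *\<^sub>R u) - g x" u] u by simp
  also have "\<dots> \<le> L * \<bar>t\<bar>"
    using gradient_lipschitz[of "x + t *\<^sub>R u" x] u by simp
  finally have "q\<^sup>2 \<le> L * (- q * t)"
    using qt mult_left_mono[of "\<bar>q\<bar>" "L * \<bar>t\<bar>" "\<bar>q\<bar>"]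
    by (simp add: power2_eq_square abs_mult_self mult_ac)
  then show "(g x \<bullet> u) * t \<le> - (g x \<bullet> u)\<^sup>2 / L"
    using L_pos by (simp add: q_def field_simps)
  show "t\<^sup>2 \<le> (g x \<bullet> u)\<^sup>2 / \<sigma>\<^sup>2"
  proof (cases "t = 0")
    case False
    then have "\<sigma> * \<bar>t\<bar> \<le> \<bar>q\<bar>"
      using st by simp
    then have "(\<sigma> * \<bar>t\<bar>)\<^sup>2 \<le> q\<^sup>2"
      using sigma_pos power_mono[of "\<sigma> * \<bar>t\<bar>" "\<bar>q\<bar>" 2] by simp
    then show ?thesis
      using sigma_pos by (simp add: q_def power_mult_distrib field_simps)
  qed simp
qed

lemma approximate_line_minimizer_bounds:
  assumes u: "norm u = 1" and t: "g (x + t *\<^sub>R u) \<bullet> u = 0" and a: "\<bar>a - t\<bar> \<le> \<delta>"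
  shows "(g x \<bullet> u) * a \<le> - 3 * (g x \<bullet> u)\<^sup>2 / (4 * L) + L * \<delta>\<^sup>2"
    and "a\<^sup>2 \<le> 2 * (g x \<bullet> u)\<^sup>2 / \<sigma>\<^sup>2 + 2 * \<delta>\<^sup>2"
proof -
  define q where "q = g x \<bullet> u"
  have "q * (a - t) \<le> \<bar>q\<bar> * \<delta>"
    using mult_left_mono[OF a abs_ge_zero[of q]] abs_ge_self[of "q * (a - t)"]
    by (simp add: abs_mult)
  also have "\<dots> \<le> q\<^sup>2 / (4 * L) + L * \<delta>\<^sup>2"
  proof -
    have "0 \<le> (\<bar>q\<bar> - 2 * L * \<delta>)\<^sup>2 / (4 * L)"
      using L_pos by simp
    then show ?thesis
      using L_pos by (simp add: field_simps power2_eq_square)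
  qed
  finally show "q * a \<le> - 3 * q\<^sup>2 / (4 * L) + L * \<delta>\<^sup>2"
    using line_minimizer_bounds(1)[OF u t] L_pos unfolding q_def[symmetric]
    by (simp add: field_simps)
  have "(a - t)\<^sup>2 \<le> \<delta>\<^sup>2"
    using a by (metis abs_ge_zero order_trans power2_abs power_mono)
  moreover have "a\<^sup>2 \<le> 2 * t\<^sup>2 + 2 * (a - t)\<^sup>2"
    using zero_le_power2[of "a - 2 * t"] by (simp add: power2_eq_square algebra_simps)
  ultimately show "a\<^sup>2 \<le> 2 * q\<^sup>2 / \<sigma>\<^sup>2 + 2 * \<delta>\<^sup>2"
    using line_minimizer_bounds(2)[OF u t] unfolding q_def[symmetric] by linarith
qed

lemma approximate_line_search_decrease:
  assumes u: "norm u = 1" and b: "g (x + b *\<^sub>R u) \<bullet> u = 0" and \<beta>: "\<bar>\<beta> - b\<bar> \<le> \<eta>"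
  shows "f (x + \<beta> *\<^sub>R u) \<le> f x - (g x \<bullet> u)\<^sup>2 / (4 * L) + L * \<eta>\<^sup>2"
proof -
  define q where "q = g x \<bullet> u"
  define \<tau> where "\<tau> = - q / (2 * L)"
  have "(x + \<beta> *\<^sub>R u) - (x + b *\<^sub>R u) = (\<beta> - b) *\<^sub>R u"
    by (simp add: algebra_simps)
  then have "f (x + \<beta> *\<^sub>R u) \<le> f (x + b *\<^sub>R u) + L * (\<beta> - b)\<^sup>2"
    using quadratic_upper_bound[of "x + \<beta> *\<^sub>R u" "x + b *\<^sub>R u"] b u
    by (simp add: inner_scaleR_right)
  moreover have "L * (\<beta> - b)\<^sup>2 \<le> L * \<eta>\<^sup>2"
    using \<beta> L_pos by (intro mult_left_mono) (auto simp: abs_le_square_iff[symmetric])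
  moreover have "f (x + b *\<^sub>R u) \<le> f (x + \<tau> *\<^sub>R u)"
    by (rule line_minimum_at_stationary[OF b])
  moreover have "f (x + \<tau> *\<^sub>R u) \<le> f x + \<tau> * q + L * \<tau>\<^sup>2"
    using quadratic_upper_bound[of "x + \<tau> *\<^sub>R u" x] u
    by (simp add: q_def inner_scaleR_right power_mult_distrib)
  moreover have "\<tau> * q + L * \<tau>\<^sup>2 = - q\<^sup>2 / (4 * L)"
    using L_pos by (simp add: \<tau>_def field_simps power2_eq_square)
  ultimately show ?thesis
    unfolding q_def by linarith
qed

end

section \<open>The comparison-based line search\<close>

text \<open>A state (a, am, ap) of ls_step consists of the current step length and the two bracket
  endpoints.\<close>

definition ls_bracket :: "real \<Rightarrow> real \<times> real \<times> real \<Rightarrow> bool" where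
  "ls_bracket t s \<longleftrightarrow> (case s of (a, am, ap) \<Rightarrow> am \<le> a \<and> a \<le> ap \<and> am \<le> t \<and> t \<le> ap)"

text \<open>The bracket width need not halve in one bisection step, but the distance from the
  current point to the farther endpoint does.\<close>

definition ls_radius :: "real \<times> real \<times> real \<Rightarrow> real" where
  "ls_radius s = (case s of (a, am, ap) \<Rightarrow> max (a - am) (ap - a))"

locale unimodal_line =
  fixes f :: "real^'n \<Rightarrow> real" and x d :: "real^'n" and t :: real
  assumes decreasing: "strict_antimono_on {..t} (\<lambda>\<alpha>. f (x + \<alpha> *\<^sub>R d))"
    and increasing: "strict_mono_on {t..} (\<lambda>\<alpha>. f (x + \<alpha> *\<^sub>R d))"
    and coercive: "\<exists>R. \<forall>s. R \<le> \<bar>s\<bar> \<longrightarrow> f x \<le> f (x + s *\<^sub>R d)"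
begin

lemma less_before_min: "a < b \<Longrightarrow> b \<le> t \<Longrightarrow> f (x + b *\<^sub>R d) < f (x + a *\<^sub>R d)"
  using monotone_onD[OF decreasing, of a b] by simp

lemma less_after_min: "t \<le> a \<Longrightarrow> a < b \<Longrightarrow> f (x + a *\<^sub>R d) < f (x + b *\<^sub>R d)"
  using monotone_onD[OF increasing, of a b] by simp

lemma ls_step_bracket:
  assumes "ls_bracket t s"
  shows "ls_bracket t (ls_step f x d s) \<and> ls_radius (ls_step f x d s) \<le> ls_radius s / 2"
proof -
  obtain a am ap where s: "s = (a, am, ap)" by (cases s)
  define mp where "mp = (a + ap) / 2"
  define mm where "mm = (a + am) / 2"
  have br: "am \<le> a" "a \<le> ap" "am \<le> t" "t \<le> ap"
    using assms unfolding s ls_bracket_def by auto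
  consider (right) "f (x + mp *\<^sub>R d) < f (x + a *\<^sub>R d)"
    | (left) "\<not> f (x + mp *\<^sub>R d) < f (x + a *\<^sub>R d)" "f (x + mm *\<^sub>R d) < f (x + a *\<^sub>R d)"
    | (shrink) "\<not> f (x + mp *\<^sub>R d) < f (x + a *\<^sub>R d)" "\<not> f (x + mm *\<^sub>R d) < f (x + a *\<^sub>R d)"
    by blast
  then show ?thesis
  proof cases
    case right
    then have "a < mp"
      using br by (cases "a = ap") (auto simp: mp_def)
    then have "a \<le> t"
      using right less_after_min[of a mp] by force
    moreover have "ls_step f x d s = (mp, a, ap)"
      using right by (simp add: s ls_step_def PC_def mp_def)
    ultimately show ?thesis
      using br by (simp add: s ls_bracket_def ls_radius_def mp_def field_simps max_def)
  next
    case left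
    then have "mm < a"
      using br by (cases "a = am") (auto simp: mm_def)
    then have "t \<le> a"
      using left less_before_min[of mm a] by force
    moreover have "ls_step f x d s = (mm, am, a)"
      using left by (simp add: s ls_step_def PC_def mp_def mm_def)
    ultimately show ?thesis
      using br by (simp add: s ls_bracket_def ls_radius_def mm_def field_simps max_def)
  next
    case shrink
    have "t \<le> mp"
      using shrink(1) br less_before_min[of a mp] by (force simp: mp_def)
    moreover have "mm \<le> t"
      using shrink(2) br less_after_min[of mm a] by (force simp: mm_def)
    moreover have "ls_step f x d s = (a, mm, mp)"
      using shrink by (simp add: s ls_step_def PC_def mp_def mm_def)
    ultimately show ?thesis
      using br by (simp add: s ls_bracket_def ls_radius_def mm_def mp_def field_simps max_def)
  qed
qed

lemma ls_iterate_bracket: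
  assumes "ls_bracket t s"
  shows "ls_bracket t ((ls_step f x d ^^ k) s) \<and> ls_radius ((ls_step f x d ^^ k) s) \<le> ls_radius s / 2 ^ k"
proof (induction k)
  case (Suc k)
  then have "ls_bracket t ((ls_step f x d ^^ Suc k) s)"
    and "ls_radius ((ls_step f x d ^^ Suc k) s) \<le> ls_radius ((ls_step f x d ^^ k) s) / 2"
    using ls_step_bracket[of "(ls_step f x d ^^ k) s"] by auto
  moreover have "ls_radius ((ls_step f x d ^^ k) s) / 2 \<le> ls_radius s / 2 ^ k / 2"
    using Suc by (simp add: divide_right_mono)
  ultimately show ?case
    by simp
qed (use assms in simp)

lemma ls_double_stops:
  assumes "\<bar>e\<bar> = 1"
  shows "f x \<le> f (x + ls_double f x d e *\<^sub>R d) \<and> (\<exists>k::nat. ls_double f x d e = e * 2 ^ k)"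
proof -
  obtain R where R: "\<And>s. R \<le> \<bar>s\<bar> \<Longrightarrow> f x \<le> f (x + s *\<^sub>R d)"
    using coercive by blast
  obtain k :: nat where "R < 2 ^ k"
    using real_arch_pow[of 2 R] by auto
  then have "\<exists>k::nat. \<not> PC f x (x + (e * 2 ^ k) *\<^sub>R d) < 0"
    using R[of "e * 2 ^ k"] assms by (auto simp: PC_def abs_mult not_less)
  from LeastI_ex[OF this] show ?thesis
    unfolding ls_double_def PC_def by (auto split: if_splits)
qed

lemma ls_double_left:
  assumes "e = -1 \<or> (e = 0 \<and> 0 \<le> t)"
  shows "ls_double f x d e \<le> 0 \<and> ls_double f x d e \<le> t"
  using assms
proof
  assume "e = -1"
  with ls_double_stops[of e] obtain k :: nat where
    stop: "f x \<le> f (x + ls_double f x d e *\<^sub>R d)" and eq: "ls_double f x d e = - (2 ^ k)"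
    by auto
  then have "\<not> t \<le> ls_double f x d e"
    using less_after_min[of "ls_double f x d e" 0] by auto
  then show ?thesis
    using eq by simp
qed (simp add: ls_double_def)

lemma ls_double_right:
  assumes "e = 1 \<or> (e = 0 \<and> t \<le> 0)"
  shows "0 \<le> ls_double f x d e \<and> t \<le> ls_double f x d e"
  using assms
proof
  assume "e = 1"
  with ls_double_stops[of e] obtain k :: nat where
    stop: "f x \<le> f (x + ls_double f x d e *\<^sub>R d)" and eq: "ls_double f x d e = 2 ^ k"
    by auto
  then have "\<not> ls_double f x d e \<le> t"
    using less_before_min[of 0 "ls_double f x d e"] by auto
  then show ?thesis
    using eq by simp
qed (simp add: ls_double_def)

lemma ls_init_brackets:
  assumes "ls_init f x d = (am, ap)"
  shows "(am = -1 \<or> (am = 0 \<and> 0 \<le> t)) \<and> (ap = 1 \<or> (ap = 0 \<and> t \<le> 0))"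
proof -
  have "0 \<le> t" if "f (x + 1 *\<^sub>R d) < f (x + 0 *\<^sub>R d)"
    using that less_after_min[of 0 1] by force
  moreover have "t \<le> 0" if "f (x + (-1) *\<^sub>R d) < f (x + 0 *\<^sub>R d)"
    using that less_before_min[of "-1" 0] by force
  ultimately show ?thesis
    using assms by (auto simp: ls_init_def PC_def split: if_splits)
qed

lemma pc_line_search_accuracy:
  assumes "0 < acc"
  shows "\<bar>pc_line_search f x d acc - t\<bar> \<le> acc"
proof -
  obtain am ap where init: "ls_init f x d = (am, ap)"
    by (cases "ls_init f x d")
  define s0 where "s0 = (0::real, ls_double f x d am, ls_double f x d ap)"
  define s where "s k = (ls_step f x d ^^ k) s0" for k
  have "ls_bracket t s0"
    using ls_init_brackets[OF init] ls_double_left[of am] ls_double_right[of ap]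
    by (simp add: s0_def ls_bracket_def)
  then have bracket: "ls_bracket t (s k) \<and> ls_radius (s k) \<le> ls_radius s0 / 2 ^ k" for k
    unfolding s_def by (rule ls_iterate_bracket)
  have width: "(case s k of (a, am, ap) \<Rightarrow> ap - am) \<le> 2 * ls_radius s0 / 2 ^ k" for k
    using bracket[of k] by (cases "s k") (auto simp: ls_bracket_def ls_radius_def)
  obtain k :: nat where "2 * ls_radius s0 / acc < 2 ^ k"
    using real_arch_pow[of 2 "2 * ls_radius s0 / acc"] by auto
  then have "2 * ls_radius s0 / 2 ^ k \<le> acc"
    using assms by (simp add: field_simps)
  define stopped where "stopped = (\<lambda>k. case s k of (a, am, ap) \<Rightarrow> ap - am \<le> acc)"
  have "stopped k"
    using width[of k] \<open>2 * ls_radius s0 / 2 ^ k \<le> acc\<close> by (cases "s k") (auto simp: stopped_def)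
  then have "stopped (Least stopped)"
    by (rule LeastI)
  moreover have "pc_line_search f x d acc = fst (s (Least stopped))"
    by (simp add: pc_line_search_def init s_def s0_def stopped_def Let_def)
  ultimately show ?thesis
    using bracket[of "Least stopped"]
    by (cases "s (Least stopped)") (auto simp: ls_bracket_def stopped_def)
qed

end

section \<open>One iteration of BlockCD\<close>

lemma norm_power2_eq_sum_components: "(norm (v :: real^'n))\<^sup>2 = (\<Sum>i\<in>UNIV. (v $ i)\<^sup>2)"
  unfolding power2_norm_eq_inner by (simp add: inner_vec_def power2_eq_square)

lemma finite_set_pmf_blockcd_dist:
  fixes f :: "real^'n \<Rightarrow> real"
  assumes "m \<le> CARD('n)"
  shows "finite (set_pmf (blockcd_dist f \<eta> m x0 t))"
  by (induction t) (simp_all add: finite_coord_choices set_pmf_of_coord_choices[OF assms])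

definition blockcd_direction :: "(real^'n \<Rightarrow> real) \<Rightarrow> real \<Rightarrow> real^'n \<Rightarrow> 'n list \<Rightarrow> real^'n" where
  "blockcd_direction f \<eta> x cs =
     (let d0 = (\<Sum>i\<in>set cs. pc_line_search f x (axis i 1) (\<eta> / 2) *\<^sub>R axis i 1)
      in if d0 = 0 then d0 + (\<eta> / 2) *\<^sub>R axis (hd cs) 1 else d0)"

lemma blockcd_step_eq:
  "blockcd_step f \<eta> x cs =
     (let u = (1 / norm (blockcd_direction f \<eta> x cs)) *\<^sub>R blockcd_direction f \<eta> x cs
      in x + pc_line_search f x u \<eta> *\<^sub>R u)"
  by (simp add: blockcd_step_def blockcd_direction_def Let_def)

locale strongly_convex_smooth_vec = strongly_convex_smooth_fun f g \<sigma> L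
  for f :: "real^'n \<Rightarrow> real" and g \<sigma> L
begin

lemma unimodal_line_at_stationary:
  assumes "d \<noteq> 0" "g (x + t *\<^sub>R d) \<bullet> d = 0"
  shows "unimodal_line f x d t"
proof
  show "strict_antimono_on {..t} (\<lambda>\<alpha>. f (x + \<alpha> *\<^sub>R d))"
    using assms by (rule line_strict_antimono_before_stationary)
  show "strict_mono_on {t..} (\<lambda>\<alpha>. f (x + \<alpha> *\<^sub>R d))"
    using assms by (rule line_strict_mono_after_stationary)
  have "2 * \<bar>g x \<bullet> d\<bar> \<le> \<sigma> * \<bar>s\<bar> * (norm d)\<^sup>2"
    if "2 * \<bar>g x \<bullet> d\<bar> / (\<sigma> * (norm d)\<^sup>2) \<le> \<bar>s\<bar>" for s
    using that assms(1) sigma_pos by (simp add: field_simps)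
  then show "\<exists>R. \<forall>s. R \<le> \<bar>s\<bar> \<longrightarrow> f x \<le> f (x + s *\<^sub>R d)"
    using line_ge_far_out by blast
qed

lemma pc_line_search_near_stationary:
  assumes "d \<noteq> 0" "g (x + t *\<^sub>R d) \<bullet> d = 0" "0 < acc"
  shows "\<bar>pc_line_search f x d acc - t\<bar> \<le> acc"
  using unimodal_line.pc_line_search_accuracy[OF unimodal_line_at_stationary[OF assms(1,2)] assms(3)] .

lemma coordinate_direction_bounds:
  fixes S :: "'n set" and a t :: "'n \<Rightarrow> real"
  assumes t: "\<And>i. i \<in> S \<Longrightarrow> g (x + t i *\<^sub>R axis i 1) \<bullet> axis i 1 = 0"
    and a: "\<And>i. i \<in> S \<Longrightarrow> \<bar>a i - t i\<bar> \<le> \<delta>"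
  defines "v \<equiv> \<Sum>i\<in>S. a i *\<^sub>R axis i 1"
  shows "g x \<bullet> v \<le> - 3 / (4 * L) * (\<Sum>i\<in>S. (g x $ i)\<^sup>2) + real (card S) * (L * \<delta>\<^sup>2)"
    and "(norm v)\<^sup>2 \<le> 2 / \<sigma>\<^sup>2 * (\<Sum>i\<in>S. (g x $ i)\<^sup>2) + real (card S) * (2 * \<delta>\<^sup>2)"
proof -
  have unit: "norm (axis i 1 :: real^'n) = 1" for i
    by simp
  have v: "v $ j = (if j \<in> S then a j else 0)" for j
    by (simp add: v_def sum_component axis_def if_distrib[of "\<lambda>x. a _ * x"] sum.delta cong: if_cong)
  have "g x \<bullet> v = (\<Sum>i\<in>S. (g x $ i) * a i)"
    by (simp add: v_def inner_sum_right inner_axis mult.commute)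
  also have "\<dots> \<le> (\<Sum>i\<in>S. - 3 / (4 * L) * (g x $ i)\<^sup>2 + L * \<delta>\<^sup>2)"
    using approximate_line_minimizer_bounds(1)[OF unit t a]
    by (intro sum_mono) (simp add: inner_axis)
  finally show "g x \<bullet> v \<le> - 3 / (4 * L) * (\<Sum>i\<in>S. (g x $ i)\<^sup>2) + real (card S) * (L * \<delta>\<^sup>2)"
    by (simp only: sum.distrib sum_distrib_left sum_constant)
  have "(norm v)\<^sup>2 = v \<bullet> v"
    by (simp add: power2_norm_eq_inner)
  also have "\<dots> = (\<Sum>i\<in>S. (a i)\<^sup>2)"
    using inner_sum_right[of v "\<lambda>i. a i *\<^sub>R axis i 1" S]
    by (simp add: v_def[symmetric] inner_axis v power2_eq_square)
  also have "\<dots> \<le> (\<Sum>i\<in>S. 2 / \<sigma>\<^sup>2 * (g x $ i)\<^sup>2 + 2 * \<delta>\<^sup>2)"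
    using approximate_line_minimizer_bounds(2)[OF unit t a]
    by (intro sum_mono) (simp add: inner_axis)
  finally show "(norm v)\<^sup>2 \<le> 2 / \<sigma>\<^sup>2 * (\<Sum>i\<in>S. (g x $ i)\<^sup>2) + real (card S) * (2 * \<delta>\<^sup>2)"
    by (simp only: sum.distrib sum_distrib_left sum_constant)
qed

lemma coordinate_direction_descent:
  fixes S :: "'n set" and a t :: "'n \<Rightarrow> real"
  assumes t: "\<And>i. i \<in> S \<Longrightarrow> g (x + t i *\<^sub>R axis i 1) \<bullet> axis i 1 = 0"
    and a: "\<And>i. i \<in> S \<Longrightarrow> \<bar>a i - t i\<bar> \<le> \<eta> / 2"
    and large: "real (card S) * L\<^sup>2 * \<eta>\<^sup>2 \<le> (\<Sum>i\<in>S. (g x $ i)\<^sup>2)"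
  defines "G \<equiv> \<Sum>i\<in>S. (g x $ i)\<^sup>2" and "v \<equiv> \<Sum>i\<in>S. a i *\<^sub>R axis i 1"
  shows "g x \<bullet> v \<le> - G / (2 * L)" and "(norm v)\<^sup>2 \<le> 3 * G / \<sigma>\<^sup>2"
proof -
  have "real (card S) * (L * (\<eta> / 2)\<^sup>2) = real (card S) * L\<^sup>2 * \<eta>\<^sup>2 / (4 * L)"
    using L_pos by (simp add: field_simps power2_eq_square)
  also have "\<dots> \<le> G / (4 * L)"
    using large L_pos by (simp add: G_def divide_right_mono)
  finally have "real (card S) * (L * (\<eta> / 2)\<^sup>2) \<le> G / (4 * L)" .
  then show "g x \<bullet> v \<le> - G / (2 * L)"
    using coordinate_direction_bounds(1)[where S = S and \<delta> = "\<eta> / 2", OF t a] L_pos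
    unfolding G_def v_def
    by (simp add: field_simps)
  have "2 * (\<eta> / 2)\<^sup>2 \<le> \<eta>\<^sup>2"
    using zero_le_power2[of \<eta>] by (simp add: power_divide)
  then have "real (card S) * (2 * (\<eta> / 2)\<^sup>2) \<le> real (card S) * \<eta>\<^sup>2"
    by (rule mult_left_mono) simp
  also have "\<dots> = real (card S) * \<sigma>\<^sup>2 * \<eta>\<^sup>2 / \<sigma>\<^sup>2"
    using sigma_pos by simp
  also have "\<dots> \<le> real (card S) * L\<^sup>2 * \<eta>\<^sup>2 / \<sigma>\<^sup>2"
    using sigma_pos sigma_le_L
    by (intro divide_right_mono mult_right_mono mult_left_mono power_mono) auto
  also have "\<dots> \<le> G / \<sigma>\<^sup>2"
    using large by (simp add: G_def divide_right_mono)
  finally show "(norm v)\<^sup>2 \<le> 3 * G / \<sigma>\<^sup>2"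
    using coordinate_direction_bounds(2)[where S = S and \<delta> = "\<eta> / 2", OF t a]
    unfolding G_def v_def
    by (simp add: field_simps)
qed

lemma descent_ratio_lower_bound:
  assumes "0 < G" "p \<le> - G / (2 * L)" "0 < N" "N \<le> 3 * G / \<sigma>\<^sup>2"
  shows "\<sigma>\<^sup>2 * G / (12 * L\<^sup>2) \<le> p\<^sup>2 / N"
proof -
  have "(G / (2 * L))\<^sup>2 \<le> p\<^sup>2"
    using power_mono[of "G / (2 * L)" "- p" 2] assms(1,2) L_pos by simp
  have "\<sigma>\<^sup>2 * G / (12 * L\<^sup>2) = (G / (2 * L))\<^sup>2 / (3 * G / \<sigma>\<^sup>2)"
    using assms(1) L_pos sigma_pos by (simp add: field_simps power2_eq_square)
  also have "\<dots> \<le> (G / (2 * L))\<^sup>2 / N"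
    using assms(1,3,4) sigma_pos by (intro divide_left_mono) auto
  also have "\<dots> \<le> p\<^sup>2 / N"
    using \<open>(G / (2 * L))\<^sup>2 \<le> p\<^sup>2\<close> assms(3) by (simp add: divide_right_mono)
  finally show ?thesis .
qed

lemma blockcd_direction_nonzero:
  assumes "0 < \<eta>"
  shows "blockcd_direction f \<eta> x cs \<noteq> 0"
  using assms by (simp add: blockcd_direction_def Let_def axis_eq_0_iff)

lemma blockcd_step_search_decrease:
  fixes x :: "real^'n" and cs :: "'n list"
  assumes \<eta>: "0 < \<eta>"
  defines "d \<equiv> blockcd_direction f \<eta> x cs"
  shows "f (blockcd_step f \<eta> x cs) \<le> f x - (g x \<bullet> d)\<^sup>2 / (4 * L * (norm d)\<^sup>2) + L * \<eta>\<^sup>2"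
proof -
  define u where "u = (1 / norm d) *\<^sub>R d"
  have "d \<noteq> 0"
    unfolding d_def using \<eta> by (rule blockcd_direction_nonzero)
  then have u: "norm u = 1"
    by (simp add: u_def)
  then obtain b where b: "g (x + b *\<^sub>R u) \<bullet> u = 0"
    using exists_line_stationary[of u x] by force
  have "f (blockcd_step f \<eta> x cs) = f (x + pc_line_search f x u \<eta> *\<^sub>R u)"
    by (simp add: blockcd_step_eq u_def d_def)
  also have "\<dots> \<le> f x - (g x \<bullet> u)\<^sup>2 / (4 * L) + L * \<eta>\<^sup>2"
    using approximate_line_search_decrease[OF u b] pc_line_search_near_stationary[of u x b \<eta>] u b \<eta>
    by force
  also have "(g x \<bullet> u)\<^sup>2 / (4 * L) = (g x \<bullet> d)\<^sup>2 / (4 * L * (norm d)\<^sup>2)"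
    by (simp add: u_def power_divide)
  finally show ?thesis .
qed

lemma blockcd_direction_descent:
  fixes x :: "real^'n"
  assumes cs: "cs \<in> coord_choices m" and \<eta>: "0 < \<eta>"
    and large: "real m * L\<^sup>2 * \<eta>\<^sup>2 \<le> (\<Sum>i\<in>set cs. (g x $ i)\<^sup>2)"
    and pos: "0 < (\<Sum>i\<in>set cs. (g x $ i)\<^sup>2)"
  defines "d \<equiv> blockcd_direction f \<eta> x cs"
  shows "\<sigma>\<^sup>2 * (\<Sum>i\<in>set cs. (g x $ i)\<^sup>2) / (12 * L\<^sup>2) \<le> (g x \<bullet> d)\<^sup>2 / (norm d)\<^sup>2"
proof -
  define G where "G = (\<Sum>i\<in>set cs. (g x $ i)\<^sup>2)"
  define d0 :: "real^'n" where "d0 = (\<Sum>i\<in>set cs. pc_line_search f x (axis i 1) (\<eta> / 2) *\<^sub>R axis i 1)"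
  have axis_nonzero: "axis i (1::real) \<noteq> 0" for i :: 'n
    by (simp add: axis_eq_0_iff)
  obtain t :: "'n \<Rightarrow> real" where t: "\<And>i. g (x + t i *\<^sub>R axis i 1) \<bullet> axis i 1 = 0"
    using exists_line_stationary[OF axis_nonzero] by metis
  have a: "\<bar>pc_line_search f x (axis i 1) (\<eta> / 2) - t i\<bar> \<le> \<eta> / 2" for i
    using \<eta> by (intro pc_line_search_near_stationary[OF axis_nonzero t]) simp
  have "card (set cs) = m"
    using cs by (simp add: coord_choices_def distinct_card)
  then have "g x \<bullet> d0 \<le> - G / (2 * L)" and "(norm d0)\<^sup>2 \<le> 3 * G / \<sigma>\<^sup>2"
    using coordinate_direction_descent[where S = "set cs", OF t a] large
    unfolding d0_def G_def by simp_all
  moreover from this(1) have "d = d0"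
    using divide_pos_pos[OF pos, of "2 * L"] L_pos
    by (auto simp: d_def d0_def G_def blockcd_direction_def Let_def)
  moreover have "d \<noteq> 0"
    unfolding d_def using \<eta> by (rule blockcd_direction_nonzero)
  ultimately show ?thesis
    using descent_ratio_lower_bound[of G "g x \<bullet> d" "(norm d)\<^sup>2"] pos by (simp add: G_def)
qed

lemma blockcd_step_decrease:
  assumes cs: "cs \<in> coord_choices m" and m: "1 \<le> m" and \<eta>: "0 < \<eta>"
  shows "f (blockcd_step f \<eta> x cs)
    \<le> f x - \<sigma>\<^sup>2 / (48 * L ^ 3) * (\<Sum>i\<in>set cs. (g x $ i)\<^sup>2) + (L + real m * L / 48) * \<eta>\<^sup>2"
proof -
  define G where "G = (\<Sum>i\<in>set cs. (g x $ i)\<^sup>2)"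
  define d where "d = blockcd_direction f \<eta> x cs"
  have search: "f (blockcd_step f \<eta> x cs) \<le> f x - (g x \<bullet> d)\<^sup>2 / (4 * L * (norm d)\<^sup>2) + L * \<eta>\<^sup>2"
    unfolding d_def using \<eta> by (rule blockcd_step_search_decrease)
  have split: "(L + real m * L / 48) * \<eta>\<^sup>2 = L * \<eta>\<^sup>2 + real m * L / 48 * \<eta>\<^sup>2"
    by (simp add: algebra_simps)
  show ?thesis
  proof (cases "G < real m * L\<^sup>2 * \<eta>\<^sup>2")
    case True
    have "\<sigma>\<^sup>2 / (48 * L ^ 3) * G \<le> L\<^sup>2 / (48 * L ^ 3) * (real m * L\<^sup>2 * \<eta>\<^sup>2)"
      using True L_pos sigma_pos sigma_le_L
      by (intro mult_mono divide_right_mono power_mono) (auto simp: G_def sum_nonneg)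
    also have "\<dots> = real m * L / 48 * \<eta>\<^sup>2"
      using L_pos by (simp add: field_simps power2_eq_square power3_eq_cube)
    finally have "\<sigma>\<^sup>2 / (48 * L ^ 3) * G \<le> real m * L / 48 * \<eta>\<^sup>2" .
    moreover have "0 \<le> (g x \<bullet> d)\<^sup>2 / (4 * L * (norm d)\<^sup>2)"
      using L_pos by simp
    ultimately show ?thesis
      using search split unfolding G_def[symmetric] by linarith
  next
    case False
    moreover have "0 < real m * L\<^sup>2 * \<eta>\<^sup>2"
      using m L_pos \<eta> by simp
    ultimately have "\<sigma>\<^sup>2 * G / (12 * L\<^sup>2) \<le> (g x \<bullet> d)\<^sup>2 / (norm d)\<^sup>2"
      unfolding G_def d_def by (intro blockcd_direction_descent[OF cs \<eta>]) simp_all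
    then have "\<sigma>\<^sup>2 / (48 * L ^ 3) * G \<le> (g x \<bullet> d)\<^sup>2 / (4 * L * (norm d)\<^sup>2)"
      using L_pos by (simp add: field_simps power2_eq_square power3_eq_cube)
    moreover have "0 \<le> real m * L / 48 * \<eta>\<^sup>2"
      using L_pos by simp
    ultimately show ?thesis
      using search split unfolding G_def[symmetric] by linarith
  qed
qed

lemma expectation_blockcd_step:
  assumes m: "1 \<le> m" "m \<le> CARD('n)" and \<eta>: "0 < \<eta>"
  shows "measure_pmf.expectation (pmf_of_set (coord_choices m)) (\<lambda>cs. f (blockcd_step f \<eta> x cs) - f z)
    \<le> (1 - \<sigma> ^ 3 * real m / (24 * L ^ 3 * real CARD('n))) * (f x - f z) + (L + real m * L / 48) * \<eta>\<^sup>2"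
proof -
  let ?P = "pmf_of_set (coord_choices m :: 'n list set)"
  define a where "a = \<sigma>\<^sup>2 / (48 * L ^ 3)"
  define B where "B = (L + real m * L / 48) * \<eta>\<^sup>2"
  have finite: "finite (set_pmf ?P)"
    using finite_coord_choices by (simp add: set_pmf_of_coord_choices[OF m(2)])
  have "measure_pmf.expectation ?P (\<lambda>cs. f (blockcd_step f \<eta> x cs) - f z)
      \<le> measure_pmf.expectation ?P (\<lambda>cs. f x - f z + B - a * (\<Sum>i\<in>set cs. (g x $ i)\<^sup>2))"
    using blockcd_step_decrease[OF _ m(1) \<eta>]
    by (intro integral_mono_AE integrable_measure_pmf_finite[OF finite])
       (auto simp: AE_measure_pmf_iff set_pmf_of_coord_choices[OF m(2)] a_def B_def algebra_simps)
  also have "\<dots> = f x - f z + B - a * (real m / real CARD('n) * (norm (g x))\<^sup>2)"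
    using expectation_coord_choices_sum[OF m(2), of "\<lambda>i. (g x $ i)\<^sup>2"]
    by (simp add: integrable_measure_pmf_finite[OF finite] norm_power2_eq_sum_components)
  also have "\<dots> \<le> f x - f z + B - a * (real m / real CARD('n) * (2 * \<sigma> * (f x - f z)))"
    using suboptimality_le_gradient_norm[of x z] sigma_pos L_pos
    by (intro diff_left_mono mult_left_mono) (auto simp: a_def field_simps)
  also have "\<dots> = (1 - \<sigma> ^ 3 * real m / (24 * L ^ 3 * real CARD('n))) * (f x - f z) + B"
    using L_pos by (simp add: a_def field_simps power2_eq_square power3_eq_cube)
  finally show ?thesis
    unfolding B_def .
qed

lemma expectation_blockcd_dist_Suc:
  assumes m: "1 \<le> m" "m \<le> CARD('n)" and \<eta>: "0 < \<eta>" and z: "\<And>y. f z \<le> f y"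
    and c: "c \<le> \<sigma> ^ 3 * real m / (24 * L ^ 3 * real CARD('n))"
  shows "measure_pmf.expectation (blockcd_dist f \<eta> m x0 (Suc t)) (\<lambda>x. f x - f z)
    \<le> (1 - c) * measure_pmf.expectation (blockcd_dist f \<eta> m x0 t) (\<lambda>x. f x - f z)
      + (L + real m * L / 48) * \<eta>\<^sup>2"
proof -
  let ?p = "blockcd_dist f \<eta> m x0 t"
  let ?N = "\<lambda>y. map_pmf (blockcd_step f \<eta> y) (pmf_of_set (coord_choices m))"
  let ?E = "\<lambda>y. measure_pmf.expectation (?N y) (\<lambda>x. f x - f z)"
  define B where "B = (L + real m * L / 48) * \<eta>\<^sup>2"
  have finite: "finite (set_pmf ?p)" "finite (set_pmf (?N y))" for y
    by (simp_all add: finite_set_pmf_blockcd_dist[OF m(2)] finite_coord_choices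
        set_pmf_of_coord_choices[OF m(2)])
  have step: "?E y \<le> (1 - c) * (f y - f z) + B" for y
  proof -
    have "c * (f y - f z) \<le> \<sigma> ^ 3 * real m / (24 * L ^ 3 * real CARD('n)) * (f y - f z)"
      using c z by (intro mult_right_mono) auto
    then show ?thesis
      using expectation_blockcd_step[OF m \<eta>, of y z] by (simp add: B_def algebra_simps)
  qed
  have "measure_pmf.expectation (blockcd_dist f \<eta> m x0 (Suc t)) (\<lambda>x. f x - f z)
      = (\<Sum>y\<in>set_pmf ?p. ?E y * pmf ?p y)"
    by (simp add: pmf_expectation_bind[OF finite(1) finite(2)] mult.commute)
  also have "\<dots> = measure_pmf.expectation ?p ?E"
    by (rule integral_measure_pmf_real[symmetric]) (use finite in auto)
  also have "\<dots> \<le> measure_pmf.expectation ?p (\<lambda>y. (1 - c) * (f y - f z) + B)"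
    using step by (intro integral_mono integrable_measure_pmf_finite finite)
  also have "\<dots> = (1 - c) * measure_pmf.expectation ?p (\<lambda>x. f x - f z) + B"
    by (simp add: integrable_measure_pmf_finite finite)
  finally show ?thesis
    unfolding B_def .
qed

lemma expectation_blockcd_dist_le:
  assumes m: "1 \<le> m" "m \<le> CARD('n)" and \<eta>: "0 < \<eta>" and z: "\<And>y. f z \<le> f y"
    and c: "0 < c" "c \<le> 1" "c \<le> \<sigma> ^ 3 * real m / (24 * L ^ 3 * real CARD('n))"
  shows "measure_pmf.expectation (blockcd_dist f \<eta> m x0 T) (\<lambda>x. f x - f z)
    \<le> (1 - c) ^ T * (f x0 - f z) + (L + real m * L / 48) * \<eta>\<^sup>2 / c"
  using linear_recurrence_bound[where E = "\<lambda>t. measure_pmf.expectation (blockcd_dist f \<eta> m x0 t) (\<lambda>x. f x - f z)",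
      OF expectation_blockcd_dist_Suc[OF m \<eta> z c(3)] c(1,2)] L_pos
  by simp

end

theorem theorem1:
  fixes f :: "real^'n \<Rightarrow> real" and x0 xstar :: "real^'n"
    and m :: nat and \<eta> \<sigma> L :: real and T :: nat
  assumes "1 \<le> m" "m \<le> CARD('n)" "\<eta> > 0" "0 < \<sigma>" "\<sigma> \<le> L"
    and "strongly_convex_smooth \<sigma> L f"
    and "\<forall>y. f xstar \<le> f y"
  defines "\<gamma> \<equiv> (\<sigma> / L) / 53 *
             ((1 - sqrt (1 - \<sigma> / L)) / (1 + sqrt (1 - \<sigma> / L)))\<^sup>2"
  defines "\<epsilon> \<equiv> 8 * real CARD('n) * L\<^sup>2 / \<sigma> * (1 + real CARD('n) / (real m * \<gamma>)) * \<eta>\<^sup>2"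
  defines "T0 \<equiv> \<lceil>real CARD('n) / (real m * \<gamma>) *
             ln ((f x0 - f xstar) * (1 + real CARD('n) / (real m * \<gamma>)) / \<epsilon>)\<rceil>"
  assumes "of_int T0 \<le> real T"
  shows "measure_pmf.expectation (blockcd_dist f \<eta> m x0 T) (\<lambda>x. f x - f xstar) \<le> \<epsilon>"
proof -
  obtain g where "strongly_convex_smooth_vec f g \<sigma> L"
    using assms(4-6) unfolding strongly_convex_smooth_def
    by (metis strongly_convex_smooth_vec.intro strongly_convex_smooth_fun.intro)
  then interpret strongly_convex_smooth_vec f g \<sigma> L .
  define c where "c = real m / real CARD('n) * \<gamma>"
  define K where "K = 8 * real CARD('n) * L\<^sup>2 / \<sigma>"
  have c: "0 < c" "c \<le> 1" "c \<le> \<sigma> ^ 3 * real m / (24 * L ^ 3 * real CARD('n))"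
    using block_rate_bounds[OF assms(1,2,4,5)] unfolding c_def \<gamma>_def by blast+
  have \<epsilon>_eq: "\<epsilon> = K * \<eta>\<^sup>2 * (1 + 1 / c)"
    by (simp add: \<epsilon>_def K_def c_def)
  have "T0 = \<lceil>1 / c * ln ((f x0 - f xstar) * (1 + 1 / c) / \<epsilon>)\<rceil>"
    by (simp add: T0_def c_def)
  moreover have "0 < K * \<eta>\<^sup>2"
    using assms(3) sigma_pos L_pos by (simp add: K_def)
  moreover have "(L + real m * L / 48) * \<eta>\<^sup>2 \<le> K * \<eta>\<^sup>2"
    unfolding K_def using step_error_le[OF assms(1) _ assms(4,5)] assms(2)
    by (intro mult_right_mono) simp_all
  ultimately have "(1 - c) ^ T * (f x0 - f xstar) + (L + real m * L / 48) * \<eta>\<^sup>2 / c \<le> \<epsilon>"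
    unfolding \<epsilon>_eq using assms(7,11) c by (intro recurrence_solution_le) auto
  then show ?thesis
    using expectation_blockcd_dist_le[OF assms(1-3) _ c, of xstar x0 T] assms(7) by simp
qed

end
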